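(* Let $D$ be an oriented link (or tangle) diagram with a shaping $\{\chi_i=(a_i,b_i,m_i)\}$, and let $c$ be a crossing of $D$, with segments labeled $1,2,1',2'$ as described in the context. If one of the relations \[ b_{2'}=b_1,\qquad b_2=m_1b_1,\qquad m_2b_2=m_1b_{1'},\qquad m_2b_{2'}=b_{1'} \] holds, then all four of them hold. In this case (the crossing is called pinched) the four quantities $b_{2'}/b_1$, $m_1b_1/b_2$, $m_2b_2/(m_1b_{1'})$, $b_{1'}/(m_2b_{2'})$ all equal $1$.
   Context: A shape is a triple $\chi=(a,b,m)$ of nonzero complex numbers. The segments of an oriented diagram are the edges of its underlying $4$-valent planar graph. At a crossing, rotate the picture so that both strands point to the right; label the incoming upper-left segment $1$, the incoming lower-left segment $2$, the outgoing lower-right segment $1'$ (the continuation of segment $1$), and the outgoing upper-right segment $2'$ (the continuation of segment $2$). Each crossing has a sign $\epsilon=\pm1$. A shaping assigns a shape $\chi_i=(a_i,b_i,m_i)$ to each segment so that at every crossing $m_{1'}=m_1$, $m_{2'}=m_2$, all components of $\chi_{1'},\chi_{2'}$ are finite and nonzero, and: at a positive crossing \[ A=1-\frac{m_1b_1}{b_2}\Big(1-\frac{a_1}{m_1}\Big)\Big(1-\frac{1}{m_2a_2}\Big),\quad a_{1'}=a_1A^{-1},\quad a_{2'}=a_2A, \] \[ b_{1'}=\frac{m_2b_2}{m_1}\Big(1-m_2a_2\big(1-\tfrac{b_2}{m_1b_1}\big)\Big)^{-1},\qquad b_{2'}=b_1\Big(1-\frac{m_1}{a_1}\big(1-\tfrac{b_2}{m_1b_1}\big)\Big);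 \] and at a negative crossing \[ \tilde A=1-\frac{b_2}{m_1b_1}(1-m_1a_1)\Big(1-\frac{m_2}{a_2}\Big),\quad a_{1'}=a_1\tilde A^{-1},\quad a_{2'}=a_2\tilde A, \] \[ b_{1'}=\frac{m_2b_2}{m_1}\Big(1-\frac{a_2}{m_2}\big(1-\tfrac{m_1b_1}{b_2}\big)\Big),\qquad b_{2'}=b_1\Big(1-\frac{1}{m_1a_1}\big(1-\tfrac{m_1b_1}{b_2}\big)\Big)^{-1}. \] *)

theory Defs
  imports Complex_Main
begin

type_synonym shape = "complex \<times> complex \<times> complex"

definition sh_a :: "shape \<Rightarrow> complex" where "sh_a \<chi> = fst \<chi>"
definition sh_b :: "shape \<Rightarrow> complex" where "sh_b \<chi> = fst (snd \<chi>)"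
definition sh_m :: "shape \<Rightarrow> complex" where "sh_m \<chi> = snd (snd \<chi>)"

definition is_shape :: "shape \<Rightarrow> bool" where
  "is_shape \<chi> \<longleftrightarrow> sh_a \<chi> \<noteq> 0 \<and> sh_b \<chi> \<noteq> 0 \<and> sh_m \<chi> \<noteq> 0"

text \<open>The shaping relations at a crossing of sign eps, with incoming segments
  1 (upper-left), 2 (lower-left) and outgoing segments 1' (lower-right,
  continuation of 1), 2' (upper-right, continuation of 2).  All four shapes are
  genuine shapes (nonzero components); the denominators appearing in the
  formulas are required to be nonzero so that all components are finite.\<close>
definition crossing_shaped ::
  "int \<Rightarrow> shape \<Rightarrow> shape \<Rightarrow> shape \<Rightarrow> shape \<Rightarrow> bool" where
  "crossing_shaped eps \<chi>1 \<chi>2 \<chi>1' \<chi>2' \<longleftrightarrow>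
     (let a1 = sh_a \<chi>1; b1 = sh_b \<chi>1; m1 = sh_m \<chi>1;
          a2 = sh_a \<chi>2; b2 = sh_b \<chi>2; m2 = sh_m \<chi>2;
          a1' = sh_a \<chi>1'; b1' = sh_b \<chi>1'; m1' = sh_m \<chi>1';
          a2' = sh_a \<chi>2'; b2' = sh_b \<chi>2'; m2' = sh_m \<chi>2'
      in is_shape \<chi>1 \<and> is_shape \<chi>2 \<and> is_shape \<chi>1' \<and> is_shape \<chi>2' \<and>
         m1' = m1 \<and> m2' = m2 \<and>
         (if eps = 1 then
            (let A = 1 - (m1 * b1 / b2) * (1 - a1 / m1) * (1 - 1 / (m2 * a2));
                 D1 = 1 - m2 * a2 * (1 - b2 / (m1 * b1))
             in A \<noteq> 0 \<and> D1 \<noteq> 0 \<and>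
                a1' = a1 / A \<and> a2' = a2 * A \<and>
                b1' = (m2 * b2 / m1) / D1 \<and>
                b2' = b1 * (1 - (m1 / a1) * (1 - b2 / (m1 * b1))))
          else
            (let A = 1 - (b2 / (m1 * b1)) * (1 - m1 * a1) * (1 - m2 / a2);
                 D2 = 1 - (1 / (m1 * a1)) * (1 - m1 * b1 / b2)
             in A \<noteq> 0 \<and> D2 \<noteq> 0 \<and>
                a1' = a1 / A \<and> a2' = a2 * A \<and>
                b1' = (m2 * b2 / m1) * (1 - (a2 / m2) * (1 - m1 * b1 / b2)) \<and>
                b2' = b1 / D2)))"

end

theory Submission imports Defs begin

text \<open>Put \<open>y = 1 - \<rho>\<close>, where \<open>\<rho>\<close> is \<open>b\<^sub>2 / (m\<^sub>1 b\<^sub>1)\<close> at a positive and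
  \<open>m\<^sub>1 b\<^sub>1 / b\<^sub>2\<close> at a negative crossing, so that the crossing is pinched exactly when
  \<open>y = 0\<close>.  With suitable nonzero parameters \<open>p, q\<close> the shaping equations turn the four
  relations into \<open>p y = 0\<close>, \<open>y = 0\<close>, \<open>q y = 0\<close> and \<open>(1 - p y)(1 - q y) = 1 - y\<close>.
  The last one factors as \<open>y N = 0\<close>, where \<open>N / ((1 - y) p q)\<close> is the factor \<open>A\<close>
  (resp. \<open>\<tilde>A\<close>) of the crossing, which is nonzero; so each relation is equivalent to \<open>y = 0\<close>.\<close>

lemma product_eq_one_minus_iff:
  fixes p q y :: "'a::idom"
  assumes "(1 - y) * p * q \<noteq> (p - 1) * (q - 1)"
  shows "(1 - p * y) * (1 - q * y) = 1 - y \<longleftrightarrow> y = 0"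
proof -
  have "(1 - p * y) * (1 - q * y) - (1 - y) = - y * ((1 - y) * p * q - (p - 1) * (q - 1))"
    by (simp add: algebra_simps)
  with assms show ?thesis
    by (metis eq_iff_diff_eq_0 mult_eq_0_iff neg_equal_0_iff_equal)
qed

lemma positive_crossing_pinched_iff:
  fixes a1 b1 m1 a2 b2 m2 b1' b2' :: "'a::field"
  assumes nonzero: "a1 \<noteq> 0" "b1 \<noteq> 0" "m1 \<noteq> 0" "a2 \<noteq> 0" "b2 \<noteq> 0" "m2 \<noteq> 0"
    and A: "1 - (m1 * b1 / b2) * (1 - a1 / m1) * (1 - 1 / (m2 * a2)) \<noteq> 0"
    and D: "1 - m2 * a2 * (1 - b2 / (m1 * b1)) \<noteq> 0"
    and b1': "b1' = (m2 * b2 / m1) / (1 - m2 * a2 * (1 - b2 / (m1 * b1)))"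
    and b2': "b2' = b1 * (1 - (m1 / a1) * (1 - b2 / (m1 * b1)))"
  shows "(b2' = b1 \<longleftrightarrow> b2 = m1 * b1)
    \<and> (m2 * b2 = m1 * b1' \<longleftrightarrow> b2 = m1 * b1)
    \<and> (m2 * b2' = b1' \<longleftrightarrow> b2 = m1 * b1)"
proof -
  define p q y where "p = m1 / a1" and "q = m2 * a2" and "y = 1 - b2 / (m1 * b1)"
  have "p \<noteq> 0" "q \<noteq> 0" using nonzero by (simp_all add: p_def q_def)
  have b2_eq: "b2 = m1 * b1 * (1 - y)" using nonzero by (simp add: y_def field_simps)
  then have "1 - y \<noteq> 0" using nonzero by auto
  have pinched_iff: "b2 = m1 * b1 \<longleftrightarrow> y = 0" using b2_eq nonzero by auto
  have "1 - q * y \<noteq> 0" using D by (simp add: q_def y_def)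
  have b1'_eq: "b1' = m2 * b1 * (1 - y) / (1 - q * y)"
    using b1' nonzero b2_eq by (simp add: q_def y_def[symmetric])
  have b2'_eq: "b2' = b1 * (1 - p * y)" using b2' by (simp add: p_def y_def)
  have "1 - (m1 * b1 / b2) * (1 - a1 / m1) * (1 - 1 / (m2 * a2))
      = ((1 - y) * p * q - (p - 1) * (q - 1)) / ((1 - y) * p * q)"
    using nonzero \<open>1 - y \<noteq> 0\<close> by (simp add: b2_eq p_def q_def field_simps)
  with A have N: "(1 - y) * p * q \<noteq> (p - 1) * (q - 1)" by auto
  have "b2' = b1 \<longleftrightarrow> y = 0" using b2'_eq nonzero \<open>p \<noteq> 0\<close> by simp
  moreover have "m2 * b2 = m1 * b1' \<longleftrightarrow> y = 0"
    using nonzero \<open>q \<noteq> 0\<close> \<open>1 - y \<noteq> 0\<close> \<open>1 - q * y \<noteq> 0\<close>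
    by (simp add: b2_eq b1'_eq field_simps)
  moreover have "m2 * b2' = b1' \<longleftrightarrow> m2 * b1 * ((1 - p * y) * (1 - q * y)) = m2 * b1 * (1 - y)"
    using \<open>1 - q * y \<noteq> 0\<close> by (simp add: b2'_eq b1'_eq field_simps)
  then have "m2 * b2' = b1' \<longleftrightarrow> (1 - p * y) * (1 - q * y) = 1 - y"
    using nonzero by simp
  ultimately show ?thesis using product_eq_one_minus_iff[OF N] pinched_iff by simp
qed

lemma negative_crossing_pinched_iff:
  fixes a1 b1 m1 a2 b2 m2 b1' b2' :: "'a::field"
  assumes nonzero: "a1 \<noteq> 0" "b1 \<noteq> 0" "m1 \<noteq> 0" "a2 \<noteq> 0" "b2 \<noteq> 0" "m2 \<noteq> 0"
    and A: "1 - (b2 / (m1 * b1)) * (1 - m1 * a1) * (1 - m2 / a2) \<noteq> 0"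
    and D: "1 - (1 / (m1 * a1)) * (1 - m1 * b1 / b2) \<noteq> 0"
    and b1': "b1' = (m2 * b2 / m1) * (1 - (a2 / m2) * (1 - m1 * b1 / b2))"
    and b2': "b2' = b1 / (1 - (1 / (m1 * a1)) * (1 - m1 * b1 / b2))"
  shows "(b2' = b1 \<longleftrightarrow> b2 = m1 * b1)
    \<and> (m2 * b2 = m1 * b1' \<longleftrightarrow> b2 = m1 * b1)
    \<and> (m2 * b2' = b1' \<longleftrightarrow> b2 = m1 * b1)"
proof -
  define p q y where "p = 1 / (m1 * a1)" and "q = a2 / m2" and "y = 1 - m1 * b1 / b2"
  have "p \<noteq> 0" "q \<noteq> 0" using nonzero by (simp_all add: p_def q_def)
  have b1_eq: "m1 * b1 = b2 * (1 - y)" using nonzero by (simp add: y_def field_simps)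
  then have "1 - y \<noteq> 0" using nonzero by auto
  have pinched_iff: "b2 = m1 * b1 \<longleftrightarrow> y = 0" using b1_eq nonzero by auto
  have b1_val: "b1 = b2 * (1 - y) / m1" using b1_eq nonzero by (simp add: field_simps)
  have "1 - p * y \<noteq> 0" using D by (simp add: p_def y_def)
  have b1'_eq: "b1' = (m2 * b2 / m1) * (1 - q * y)" using b1' by (simp add: q_def y_def)
  have b2'_eq: "b2' = b1 / (1 - p * y)" using b2' by (simp add: p_def y_def)
  have "1 - (b2 / (m1 * b1)) * (1 - m1 * a1) * (1 - m2 / a2)
      = ((1 - y) * p * q - (p - 1) * (q - 1)) / ((1 - y) * p * q)"
    using nonzero \<open>1 - y \<noteq> 0\<close> by (simp add: b1_val p_def q_def field_simps)
  with A have N: "(1 - y) * p * q \<noteq> (p - 1) * (q - 1)" by auto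
  have "b2' = b1 \<longleftrightarrow> y = 0"
    using nonzero \<open>p \<noteq> 0\<close> \<open>1 - p * y \<noteq> 0\<close> by (simp add: b2'_eq field_simps)
  moreover have "m2 * b2 = m1 * b1' \<longleftrightarrow> y = 0"
    using nonzero \<open>q \<noteq> 0\<close> by (simp add: b1'_eq field_simps)
  moreover have "m2 * b2' = b1' \<longleftrightarrow> m1 * m2 * b2 * (1 - y) = m1 * m2 * b2 * ((1 - p * y) * (1 - q * y))"
    using nonzero \<open>1 - p * y \<noteq> 0\<close> by (simp add: b2'_eq b1'_eq b1_val field_simps)
  then have "m2 * b2' = b1' \<longleftrightarrow> (1 - p * y) * (1 - q * y) = 1 - y"
    using nonzero by auto
  ultimately show ?thesis using product_eq_one_minus_iff[OF N] pinched_iff by simp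
qed

lemma crossing_shaped_pinched_iff:
  assumes "crossing_shaped eps \<chi>1 \<chi>2 \<chi>1' \<chi>2'"
  shows "(sh_b \<chi>2' = sh_b \<chi>1 \<longleftrightarrow> sh_b \<chi>2 = sh_m \<chi>1 * sh_b \<chi>1)
    \<and> (sh_m \<chi>2 * sh_b \<chi>2 = sh_m \<chi>1 * sh_b \<chi>1' \<longleftrightarrow> sh_b \<chi>2 = sh_m \<chi>1 * sh_b \<chi>1)
    \<and> (sh_m \<chi>2 * sh_b \<chi>2' = sh_b \<chi>1' \<longleftrightarrow> sh_b \<chi>2 = sh_m \<chi>1 * sh_b \<chi>1)"
proof (cases "eps = 1")
  case True
  with assms show ?thesis
    unfolding crossing_shaped_def Let_def is_shape_def if_P[OF True]
    by - (elim conjE, rule positive_crossing_pinched_iff, assumption+)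
next
  case False
  with assms show ?thesis
    unfolding crossing_shaped_def Let_def is_shape_def if_not_P[OF False]
    by - (elim conjE, rule negative_crossing_pinched_iff, assumption+)
qed

theorem proposition2p15:
  fixes eps :: int and \<chi>1 \<chi>2 \<chi>1' \<chi>2' :: shape
  assumes "eps = 1 \<or> eps = -1"
    and "crossing_shaped eps \<chi>1 \<chi>2 \<chi>1' \<chi>2'"
    and "sh_b \<chi>2' = sh_b \<chi>1
         \<or> sh_b \<chi>2 = sh_m \<chi>1 * sh_b \<chi>1
         \<or> sh_m \<chi>2 * sh_b \<chi>2 = sh_m \<chi>1 * sh_b \<chi>1'
         \<or> sh_m \<chi>2 * sh_b \<chi>2' = sh_b \<chi>1'"
  shows "sh_b \<chi>2' = sh_b \<chi>1
         \<and> sh_b \<chi>2 = sh_m \<chi>1 * sh_b \<chi>1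
         \<and> sh_m \<chi>2 * sh_b \<chi>2 = sh_m \<chi>1 * sh_b \<chi>1'
         \<and> sh_m \<chi>2 * sh_b \<chi>2' = sh_b \<chi>1'
         \<and> sh_b \<chi>2' / sh_b \<chi>1 = 1
         \<and> sh_m \<chi>1 * sh_b \<chi>1 / sh_b \<chi>2 = 1
         \<and> sh_m \<chi>2 * sh_b \<chi>2 / (sh_m \<chi>1 * sh_b \<chi>1') = 1
         \<and> sh_b \<chi>1' / (sh_m \<chi>2 * sh_b \<chi>2') = 1"
proof -
  have relations: "sh_b \<chi>2' = sh_b \<chi>1" "sh_b \<chi>2 = sh_m \<chi>1 * sh_b \<chi>1"
    "sh_m \<chi>2 * sh_b \<chi>2 = sh_m \<chi>1 * sh_b \<chi>1'" "sh_m \<chi>2 * sh_b \<chi>2' = sh_b \<chi>1'"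
    using crossing_shaped_pinched_iff[OF assms(2)] assms(3) by blast+
  have "sh_b \<chi>1 \<noteq> 0" "sh_m \<chi>1 \<noteq> 0" "sh_m \<chi>2 \<noteq> 0" "sh_b \<chi>1' \<noteq> 0"
    using assms(2) unfolding crossing_shaped_def Let_def is_shape_def by auto
  with relations show ?thesis by auto
qed

end
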